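(* Let $0<a<1/2$, $a+1/2<b<1$, $K(n)\sim n^a$, $C_n=e^{n^{b-a}}$, and $$\mathcal F_n=\{(\theta_n,\rho):|\theta_{in}|\le C_n,\ i=1,\dots,K(n),\ |\rho|\le\log C_n\}.$$ With prior $p(\omega_n)=(2\pi\eta^2)^{-1/2}e^{-\rho^2/(2\eta^2)}\prod_{i=1}^{K(n)}(2\pi\zeta^2)^{-1/2}e^{-\theta_{in}^2/(2\zeta^2)}$ on $\omega_n=(\theta_n,\rho)$ (with $\eta,\zeta>0$ fixed), for every $\kappa>0$ we have $\int_{\mathcal F_n^c}p(\omega_n)d\omega_n\le e^{-n\kappa}$ for all sufficiently large $n$.
   Context: $\theta_n=(\theta_{1n},\dots,\theta_{K(n)n})\in\mathbb R^{K(n)}$ is the vector of network parameters and $\rho\in\mathbb R$ is the reparametrized scale parameter ($\sigma=\log(1+e^\rho)$); $K(n)\sim n^a$ means $K(n)$ grows at the rate $n^a$. *)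

theory Defs
  imports "HOL-Probability.Probability"
begin

definition param_space :: "nat \<Rightarrow> ((nat \<Rightarrow> real) \<times> real) measure" where
  "param_space K = (PiM {..<K} (\<lambda>_. lborel)) \<Otimes>\<^sub>M lborel"

definition prior_density :: "nat \<Rightarrow> real \<Rightarrow> real \<Rightarrow> (nat \<Rightarrow> real) \<times> real \<Rightarrow> real" where
  "prior_density K \<eta> \<zeta> \<omega> =
     normal_density 0 \<eta> (snd \<omega>) * (\<Prod>i<K. normal_density 0 \<zeta> (fst \<omega> i))"

definition C_seq :: "real \<Rightarrow> real \<Rightarrow> nat \<Rightarrow> real" where
  "C_seq a b n = exp (real n powr (b - a))"

definition sieve :: "real \<Rightarrow> real \<Rightarrow> nat \<Rightarrow> nat \<Rightarrow> ((nat \<Rightarrow> real) \<times> real) set" where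
  "sieve a b K n = {(\<theta>, \<rho>). (\<forall>i<K. \<bar>\<theta> i\<bar> \<le> C_seq a b n) \<and> \<bar>\<rho>\<bar> \<le> ln (C_seq a b n)}"

end

theory Submission
  imports Defs
begin

(* Splitting every Gaussian factor as
     phi_s(x) = sqrt 2 * exp (-x^2 / (4 s^2)) * phi_(sqrt 2 * s)(x)
   bounds the prior density by sqrt 2 ^ (K+1) * exp (-|omega|^2 / (4 max(eta,zeta)^2)) times the
   prior with doubled variances, which is again a probability density. Outside the sieve
   |omega| >= log C_n = n^(b-a), so the prior mass there is at most
   sqrt 2 ^ (K+1) * exp (-n^(2(b-a)) / (4 max(eta,zeta)^2)); as K(n) = o(n) and 2(b-a) > 1,
   this is eventually below exp (-n kappa). *)

lemma normal_density_eq_wider: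
  assumes "0 < \<sigma>"
  shows "normal_density \<mu> \<sigma> x
    = sqrt 2 * exp (- ((x - \<mu>)^2) / (4 * \<sigma>^2)) * normal_density \<mu> (sqrt 2 * \<sigma>) x"
proof -
  have "exp (- ((x - \<mu>)^2) / (2 * \<sigma>^2))
      = exp (- ((x - \<mu>)^2) / (4 * \<sigma>^2)) * exp (- ((x - \<mu>)^2) / (4 * \<sigma>^2))"
    unfolding exp_add[symmetric] using assms by (simp add: field_simps)
  moreover have "sqrt (2 * pi * (sqrt 2 * \<sigma>)^2) = sqrt 2 * sqrt (2 * pi * \<sigma>^2)"
    by (simp add: power_mult_distrib real_sqrt_mult)
  ultimately show ?thesis
    unfolding normal_density_def by (simp add: power_mult_distrib)
qed

lemma normal_density_le_wider:
  assumes "0 < \<sigma>" "\<sigma> \<le> S"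
  shows "normal_density \<mu> \<sigma> x
    \<le> sqrt 2 * exp (- ((x - \<mu>)^2) / (4 * S^2)) * normal_density \<mu> (sqrt 2 * \<sigma>) x"
proof -
  have "(x - \<mu>)^2 / (4 * S^2) \<le> (x - \<mu>)^2 / (4 * \<sigma>^2)"
    using assms by (intro divide_left_mono) (auto intro!: power_mono)
  then have "exp (- ((x - \<mu>)^2) / (4 * \<sigma>^2)) \<le> exp (- ((x - \<mu>)^2) / (4 * S^2))"
    by simp
  then show ?thesis
    unfolding normal_density_eq_wider[OF assms(1)] by (intro mult_right_mono mult_left_mono) auto
qed

lemma prior_density_le_wider:
  assumes "0 < \<eta>" "0 < \<zeta>"
  shows "prior_density k \<eta> \<zeta> (\<theta>, \<rho>)
    \<le> sqrt 2 ^ Suc k * exp (- (\<rho>^2 + (\<Sum>i<k. (\<theta> i)^2)) / (4 * (max \<eta> \<zeta>)^2))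
       * prior_density k (sqrt 2 * \<eta>) (sqrt 2 * \<zeta>) (\<theta>, \<rho>)"
proof -
  define d where "d = 4 * (max \<eta> \<zeta>)^2"
  define E where "E x = exp (- (x^2) / d)" for x
  have bound_\<rho>: "normal_density 0 \<eta> \<rho> \<le> sqrt 2 * E \<rho> * normal_density 0 (sqrt 2 * \<eta>) \<rho>"
    using normal_density_le_wider[of \<eta> "max \<eta> \<zeta>" 0 \<rho>] assms unfolding E_def d_def by simp
  have bound_\<theta>: "(\<Prod>i<k. normal_density 0 \<zeta> (\<theta> i))
      \<le> (\<Prod>i<k. sqrt 2 * E (\<theta> i) * normal_density 0 (sqrt 2 * \<zeta>) (\<theta> i))"
    using normal_density_le_wider[of \<zeta> "max \<eta> \<zeta>" 0] assms unfolding E_def d_def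
    by (intro prod_mono) simp
  have "prior_density k \<eta> \<zeta> (\<theta>, \<rho>)
      \<le> (sqrt 2 * E \<rho> * normal_density 0 (sqrt 2 * \<eta>) \<rho>)
         * (\<Prod>i<k. sqrt 2 * E (\<theta> i) * normal_density 0 (sqrt 2 * \<zeta>) (\<theta> i))"
    unfolding prior_density_def prod.sel
    by (rule mult_mono[OF bound_\<rho> bound_\<theta>]) (auto simp: prod_nonneg E_def)
  also have "\<dots> = sqrt 2 ^ Suc k * (E \<rho> * (\<Prod>i<k. E (\<theta> i)))
       * prior_density k (sqrt 2 * \<eta>) (sqrt 2 * \<zeta>) (\<theta>, \<rho>)"
    unfolding prior_density_def by (simp add: prod.distrib)
  also have "E \<rho> * (\<Prod>i<k. E (\<theta> i)) = exp (- (\<rho>^2) / d + (\<Sum>i<k. - ((\<theta> i)^2) / d))"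
    by (simp only: E_def exp_add exp_sum finite_lessThan)
  also have "- (\<rho>^2) / d + (\<Sum>i<k. - ((\<theta> i)^2) / d) = - (\<rho>^2 + (\<Sum>i<k. (\<theta> i)^2)) / d"
    by (simp add: diff_divide_distrib sum_divide_distrib sum_negf)
  finally show ?thesis unfolding d_def .
qed

lemma nn_integral_prod_normal_density:
  fixes k :: nat
  assumes "0 < \<sigma>"
  shows "(\<integral>\<^sup>+ \<theta>. ennreal (\<Prod>i<k. normal_density 0 \<sigma> (\<theta> i)) \<partial>PiM {..<k} (\<lambda>_. lborel)) = 1"
proof -
  interpret product_sigma_finite "\<lambda>_::nat. lborel" ..
  have "(\<integral>\<^sup>+ \<theta>. ennreal (\<Prod>i<k. normal_density 0 \<sigma> (\<theta> i)) \<partial>PiM {..<k} (\<lambda>_. lborel))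
      = (\<Prod>i<k. \<integral>\<^sup>+ x. ennreal (normal_density 0 \<sigma> x) \<partial>lborel)"
    using product_nn_integral_prod[of "{..<k}" "\<lambda>_ x. ennreal (normal_density 0 \<sigma> x)"]
    by (simp add: prod_ennreal)
  also have "\<dots> = 1"
    using assms by (simp add: nn_integral_eq_integral)
  finally show ?thesis .
qed

lemma nn_integral_prior_density:
  assumes "0 < \<eta>" "0 < \<zeta>"
  shows "(\<integral>\<^sup>+ \<omega>. ennreal (prior_density k \<eta> \<zeta> \<omega>) \<partial>param_space k) = 1"
proof -
  have "(\<integral>\<^sup>+ \<omega>. ennreal (prior_density k \<eta> \<zeta> \<omega>) \<partial>param_space k)
      = (\<integral>\<^sup>+ \<theta>. (\<integral>\<^sup>+ \<rho>. ennreal (normal_density 0 \<eta> \<rho>) \<partial>lborel)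
           * ennreal (\<Prod>i<k. normal_density 0 \<zeta> (\<theta> i)) \<partial>PiM {..<k} (\<lambda>_. lborel))"
    unfolding param_space_def prior_density_def
    by (subst lborel.nn_integral_fst[symmetric])
       (auto simp: ennreal_mult prod_nonneg nn_integral_multc intro!: nn_integral_cong)
  also have "\<dots> = 1"
    using assms by (simp add: nn_integral_eq_integral nn_integral_prod_normal_density)
  finally show ?thesis .
qed

lemma sum_squares_ge_outside_sieve:
  assumes "(\<theta>, \<rho>) \<notin> sieve a b k n"
  shows "(real n powr (b - a))^2 \<le> \<rho>^2 + (\<Sum>i<k. (\<theta> i)^2)"
proof -
  define t where "t = real n powr (b - a)"
  have "t \<le> exp t"
    using exp_ge_add_one_self[of t] by linarith
  with assms have "t < \<bar>\<rho>\<bar> \<or> (\<exists>i<k. t < \<bar>\<theta> i\<bar>)"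
    unfolding sieve_def C_seq_def t_def by force
  moreover have "0 \<le> t"
    unfolding t_def by simp
  ultimately have "t^2 \<le> \<rho>^2 \<or> (\<exists>i<k. t^2 \<le> (\<theta> i)^2)"
    by (metis abs_le_square_iff abs_of_nonneg less_imp_le)
  moreover have "(\<theta> i)^2 \<le> \<rho>^2 + (\<Sum>i<k. (\<theta> i)^2)" if "i < k" for i
    using that by (intro add_increasing zero_le_power2 member_le_sum) auto
  moreover have "\<rho>^2 \<le> \<rho>^2 + (\<Sum>i<k. (\<theta> i)^2)"
    by (simp add: sum_nonneg)
  ultimately show ?thesis
    unfolding t_def by (meson order_trans)
qed

lemma set_integral_le_of_le_cmult_density:
  fixes f g :: "'a \<Rightarrow> real"
  assumes "g \<in> borel_measurable M" "(\<integral>\<^sup>+ x. ennreal (g x) \<partial>M) \<le> 1" "0 \<le> c"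
    and "\<And>x. x \<in> A \<Longrightarrow> f x \<le> c * g x"
  shows "(LINT x:A|M. f x) \<le> c"
  unfolding set_lebesgue_integral_def
proof (rule integral_real_bounded[OF \<open>0 \<le> c\<close>])
  have "(\<integral>\<^sup>+ x. ennreal (indicator A x *\<^sub>R f x) \<partial>M) \<le> (\<integral>\<^sup>+ x. ennreal c * ennreal (g x) \<partial>M)"
    using assms(3,4)
    by (intro nn_integral_mono) (auto simp: indicator_def ennreal_mult'[symmetric] intro: ennreal_leI)
  also have "\<dots> = ennreal c * (\<integral>\<^sup>+ x. ennreal (g x) \<partial>M)"
    using assms(1) by (simp add: nn_integral_cmult)
  also have "\<dots> \<le> ennreal c"
    using mult_left_mono[OF assms(2)] by simp
  finally show "(\<integral>\<^sup>+ x. ennreal (indicator A x *\<^sub>R f x) \<partial>M) \<le> ennreal c" .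
qed

lemma set_integral_prior_density_outside_sieve_le:
  assumes "0 < \<eta>" "0 < \<zeta>"
  shows "(LINT \<omega> : space (param_space k) - sieve a b k n | param_space k. prior_density k \<eta> \<zeta> \<omega>)
    \<le> sqrt 2 ^ Suc k * exp (- ((real n powr (b - a))^2) / (4 * (max \<eta> \<zeta>)^2))"
proof (rule set_integral_le_of_le_cmult_density)
  show "prior_density k (sqrt 2 * \<eta>) (sqrt 2 * \<zeta>) \<in> borel_measurable (param_space k)"
    unfolding prior_density_def param_space_def by measurable
  show "(\<integral>\<^sup>+ \<omega>. ennreal (prior_density k (sqrt 2 * \<eta>) (sqrt 2 * \<zeta>) \<omega>) \<partial>param_space k) \<le> 1"
    using assms by (simp add: nn_integral_prior_density)
next
  fix \<omega> assume \<omega>: "\<omega> \<in> space (param_space k) - sieve a b k n"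
  obtain \<theta> \<rho> where \<omega>_eq: "\<omega> = (\<theta>, \<rho>)"
    by fastforce
  define d where "d = 4 * (max \<eta> \<zeta>)^2"
  have "- (\<rho>^2 + (\<Sum>i<k. (\<theta> i)^2)) / d \<le> - ((real n powr (b - a))^2) / d"
    using \<omega> sum_squares_ge_outside_sieve[of \<theta> \<rho> a b k n] unfolding \<omega>_eq d_def by (intro divide_right_mono) auto
  then have "sqrt 2 ^ Suc k * exp (- (\<rho>^2 + (\<Sum>i<k. (\<theta> i)^2)) / d)
        * prior_density k (sqrt 2 * \<eta>) (sqrt 2 * \<zeta>) (\<theta>, \<rho>)
      \<le> sqrt 2 ^ Suc k * exp (- ((real n powr (b - a))^2) / d)
        * prior_density k (sqrt 2 * \<eta>) (sqrt 2 * \<zeta>) (\<theta>, \<rho>)"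
    by (intro mult_right_mono mult_left_mono) (auto simp: prior_density_def prod_nonneg)
  then show "prior_density k \<eta> \<zeta> \<omega> \<le> sqrt 2 ^ Suc k * exp (- ((real n powr (b - a))^2) / d)
      * prior_density k (sqrt 2 * \<eta>) (sqrt 2 * \<zeta>) \<omega>"
    unfolding \<omega>_eq d_def by (rule order_trans[OF prior_density_le_wider[OF assms]])
qed simp

lemma sqrt_2_power_le_exp: "sqrt 2 ^ k \<le> exp (real k)"
proof -
  have "sqrt 2 \<le> exp 1"
    using exp_ge_add_one_self[of 1] real_sqrt_le_iff[of 2 4] by simp
  then have "sqrt 2 ^ k \<le> exp 1 ^ k"
    by (rule power_mono) simp
  then show ?thesis
    by (simp add: exp_of_nat_mult[symmetric])
qed

lemma eventually_sqrt_2_power_mult_exp_le: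
  fixes K :: "nat \<Rightarrow> nat"
  assumes "(\<lambda>n. real (K n)) \<in> o(real)" "1/2 < q" "0 < d" "0 \<le> \<kappa>"
  shows "eventually (\<lambda>n. sqrt 2 ^ Suc (K n) * exp (- ((real n powr q)^2) / d)
    \<le> exp (- real n * \<kappa>)) at_top"
proof -
  have "(\<lambda>n. real n powr 1) \<in> o(\<lambda>n. real n powr (2 * q))"
    using assms(2) by (subst powr_smallo_iff) (auto simp: filterlim_real_sequentially)
  moreover have pos: "0 < (2 + \<kappa>) * d"
    using assms(3,4) by simp
  ultimately have "eventually (\<lambda>n. real n \<le> 1 / ((2 + \<kappa>) * d) * real n powr (2 * q)) at_top"
    by (auto dest: landau_o.smallD[of _ _ _ "1 / ((2 + \<kappa>) * d)"])
  then have "eventually (\<lambda>n. (2 + \<kappa>) * d * real n \<le> real n powr (2 * q)) at_top"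
    by eventually_elim (use pos in \<open>simp add: field_simps\<close>)
  moreover have "eventually (\<lambda>n. real (K n) \<le> real n) at_top"
    using landau_o.smallD[OF assms(1), of 1] by simp
  moreover have "eventually (\<lambda>n. (1::nat) \<le> n) at_top"
    by (rule eventually_ge_at_top)
  ultimately show ?thesis
  proof eventually_elim
    case (elim n)
    have "real (Suc (K n)) + real n * \<kappa> \<le> (2 + \<kappa>) * real n"
      using elim(2,3) by (simp add: algebra_simps)
    also have "\<dots> \<le> real n powr (2 * q) / d"
      using elim(1) assms(3) by (simp add: field_simps)
    also have "real n powr (2 * q) = (real n powr q)^2"
      by (simp add: power2_eq_square powr_add[symmetric])
    finally have "real (Suc (K n)) + real n * \<kappa> \<le> (real n powr q)^2 / d" .
    then have "exp (real (Suc (K n))) * exp (- ((real n powr q)^2) / d) \<le> exp (- real n * \<kappa>)"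
      by (simp flip: exp_add)
    then show ?case
      using sqrt_2_power_le_exp[of "Suc (K n)"]
      by (elim order_trans[rotated]) (simp add: mult_right_mono)
  qed
qed

theorem lemma20:
  fixes a b \<eta> \<zeta> \<kappa> :: real and K :: "nat \<Rightarrow> nat"
  assumes "0 < a" "a < 1/2" "a + 1/2 < b" "b < 1"
    and "(\<lambda>n. real (K n)) \<sim>[at_top] (\<lambda>n. real n powr a)"
    and "\<eta> > 0" "\<zeta> > 0" "\<kappa> > 0"
  shows "eventually (\<lambda>n.
     (LINT \<omega> : space (param_space (K n)) - sieve a b (K n) n | param_space (K n).
        prior_density (K n) \<eta> \<zeta> \<omega>) \<le> exp (- real n * \<kappa>)) at_top"
proof -
  have "(\<lambda>n. real n powr a) \<in> o(\<lambda>n. real n powr 1)"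
    using assms(2) by (subst powr_smallo_iff) (auto simp: filterlim_real_sequentially)
  then have "(\<lambda>n. real (K n)) \<in> o(real)"
    using landau_o.big_small_trans[OF asymp_equiv_imp_bigo[OF assms(5)]] by simp
  moreover have "1/2 < b - a" "0 < 4 * (max \<eta> \<zeta>)^2"
    using assms(3,6) by auto
  ultimately have "eventually (\<lambda>n. sqrt 2 ^ Suc (K n)
      * exp (- ((real n powr (b - a))^2) / (4 * (max \<eta> \<zeta>)^2)) \<le> exp (- real n * \<kappa>)) at_top"
    using assms(8) by (intro eventually_sqrt_2_power_mult_exp_le) auto
  then show ?thesis
    by (rule eventually_mono)
       (rule order_trans[OF set_integral_prior_density_outside_sieve_le[OF assms(6,7)]])
qed

end
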